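(* For $n\ge2$, consider the IID instance in which each of the $n$ actions independently has a good type with (receiver, sender) values $(1,1)$ with probability $1/n$ and a bad type with values $(0,0)$ with probability $1-1/n$. Then for every $k\in\{2,\dots,n\}$, $\operatorname{OPT}_k\le\frac{e}{e-1}\cdot\frac kn\cdot\operatorname{OPT}_n$.
   Context: Bayesian persuasion: receiver chooses one of actions $[n]$; the sender observes the state (types of all actions) and sends one of $k$ signals according to a committed scheme; the receiver picks an action maximizing her conditional expected value given the signal, ties broken in favor of the sender. $\operatorname{OPT}_k$ denotes the maximal expected sender utility over all schemes with $k$ signals. *)

theory Defs
  imports Complex_Main
begin

text \<open>A signaling scheme with k signals: phi w s = probability of sending signal s (s < k) in state w.\<close>

definition is_scheme :: "'w set \<Rightarrow> nat \<Rightarrow> ('w \<Rightarrow> nat \<Rightarrow> real) \<Rightarrow> bool" where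
  "is_scheme Omega k phi \<longleftrightarrow>
     (\<forall>w\<in>Omega. (\<forall>s<k. phi w s \<ge> 0) \<and> (\<Sum>s<k. phi w s) = 1)"

text \<open>Unnormalised conditional expectation: Pr[signal s] * E[v(w,i) | signal s].\<close>
definition sig_val :: "'w set \<Rightarrow> ('w \<Rightarrow> real) \<Rightarrow> ('w \<Rightarrow> nat \<Rightarrow> real) \<Rightarrow>
    ('w \<Rightarrow> 'a \<Rightarrow> real) \<Rightarrow> nat \<Rightarrow> 'a \<Rightarrow> real" where
  "sig_val Omega mu phi v s i = (\<Sum>w\<in>Omega. mu w * phi w s * v w i)"

definition best_resp :: "'w set \<Rightarrow> ('w \<Rightarrow> real) \<Rightarrow> 'a set \<Rightarrow> ('w \<Rightarrow> 'a \<Rightarrow> real) \<Rightarrow>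
    ('w \<Rightarrow> nat \<Rightarrow> real) \<Rightarrow> nat \<Rightarrow> 'a set" where
  "best_resp Omega mu A vR phi s =
     {i\<in>A. \<forall>j\<in>A. sig_val Omega mu phi vR s j \<le> sig_val Omega mu phi vR s i}"

text \<open>Sender's expected utility, ties broken in favour of the sender.\<close>
definition sender_util :: "'w set \<Rightarrow> ('w \<Rightarrow> real) \<Rightarrow> 'a set \<Rightarrow> ('w \<Rightarrow> 'a \<Rightarrow> real) \<Rightarrow>
    ('w \<Rightarrow> 'a \<Rightarrow> real) \<Rightarrow> nat \<Rightarrow> ('w \<Rightarrow> nat \<Rightarrow> real) \<Rightarrow> real" where
  "sender_util Omega mu A vR vS k phi =
     (\<Sum>s<k. Max (sig_val Omega mu phi vS s ` best_resp Omega mu A vR phi s))"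

definition OPT :: "'w set \<Rightarrow> ('w \<Rightarrow> real) \<Rightarrow> 'a set \<Rightarrow> ('w \<Rightarrow> 'a \<Rightarrow> real) \<Rightarrow>
    ('w \<Rightarrow> 'a \<Rightarrow> real) \<Rightarrow> nat \<Rightarrow> real" where
  "OPT Omega mu A vR vS k =
     Sup (sender_util Omega mu A vR vS k ` {phi. is_scheme Omega k phi})"

text \<open>The IID instance: actions {0..<n}; a state is the set G of good actions;
  each action is good independently with probability 1/n; good = (1,1), bad = (0,0).\<close>
definition iid_states :: "nat \<Rightarrow> nat set set" where
  "iid_states n = Pow {..<n}"

definition iid_prior :: "nat \<Rightarrow> nat set \<Rightarrow> real" where
  "iid_prior n G = (1 / real n) ^ card G * (1 - 1 / real n) ^ (n - card G)"

definition iid_val :: "nat set \<Rightarrow> nat \<Rightarrow> real" where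
  "iid_val G i = (if i \<in> G then 1 else 0)"

definition OPT_iid :: "nat \<Rightarrow> nat \<Rightarrow> real" where
  "OPT_iid n k = OPT (iid_states n) (iid_prior n) {..<n} iid_val iid_val k"

end

theory Submission
  imports Defs
begin

text \<open>When receiver and sender values coincide, the sender gets, for each signal, the largest
  (unnormalised) conditional value of an action. This is at most the action's prior expectation
  \<open>1/n\<close>, so \<open>k\<close> signals yield at most \<open>k/n\<close>. With \<open>n\<close> signals the sender can
  recommend the smallest good action, which is good whenever one exists; this gives
  \<open>1 - (1 - 1/n)^n \<ge> 1 - 1/e\<close>, and \<open>(k/n) / (1 - 1/e)\<close> is the claimed bound.\<close>

definition pure_scheme :: "('w \<Rightarrow> nat) \<Rightarrow> 'w \<Rightarrow> nat \<Rightarrow> real" where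
  "pure_scheme \<sigma> w s = of_bool (s = \<sigma> w)"

lemma is_scheme_pure_scheme:
  assumes "\<And>w. w \<in> Omega \<Longrightarrow> \<sigma> w < k"
  shows "is_scheme Omega k (pure_scheme \<sigma>)"
  using assms by (simp add: is_scheme_def pure_scheme_def)

lemma is_scheme_le_one:
  assumes "is_scheme Omega k phi" "w \<in> Omega" "s < k"
  shows "phi w s \<le> 1"
proof -
  have "phi w s \<le> (\<Sum>t<k. phi w t)"
    by (rule member_le_sum) (use assms in \<open>auto simp: is_scheme_def\<close>)
  then show ?thesis
    using assms by (simp add: is_scheme_def)
qed

lemma Max_sig_val_best_resp:
  assumes "finite A" "A \<noteq> {}"
  shows "Max (sig_val Omega mu phi v s ` best_resp Omega mu A v phi s)
       = Max (sig_val Omega mu phi v s ` A)"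
proof -
  let ?f = "sig_val Omega mu phi v s"
  have "Max (?f ` A) \<in> ?f ` A"
    using assms by simp
  then obtain i where i: "i \<in> A" "?f i = Max (?f ` A)"
    by auto
  have le_Max: "?f j \<le> Max (?f ` A)" if "j \<in> A" for j
    using assms that by simp
  have "best_resp Omega mu A v phi s = {j\<in>A. ?f j = Max (?f ` A)}"
    unfolding best_resp_def using i le_Max by (force intro: antisym)
  then have "?f ` best_resp Omega mu A v phi s = {Max (?f ` A)}"
    using i by auto
  then show ?thesis by simp
qed

lemma sender_util_aligned:
  assumes "finite A" "A \<noteq> {}"
  shows "sender_util Omega mu A v v k phi = (\<Sum>s<k. Max (sig_val Omega mu phi v s ` A))"
  unfolding sender_util_def by (simp add: Max_sig_val_best_resp[OF assms])

lemma sig_val_le_expectation: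
  assumes "is_scheme Omega k phi" "s < k"
    and "\<And>w. w \<in> Omega \<Longrightarrow> mu w \<ge> 0" "\<And>w. w \<in> Omega \<Longrightarrow> v w i \<ge> 0"
  shows "sig_val Omega mu phi v s i \<le> (\<Sum>w\<in>Omega. mu w * v w i)"
  unfolding sig_val_def
proof (rule sum_mono)
  fix w assume w: "w \<in> Omega"
  have "mu w * v w i * phi w s \<le> mu w * v w i"
    using is_scheme_le_one[OF assms(1) w assms(2)] assms(3,4)[OF w]
    by (simp add: mult_left_le)
  then show "mu w * phi w s * v w i \<le> mu w * v w i"
    by (simp add: mult_ac)
qed

lemma sender_util_aligned_le:
  assumes "finite A" "A \<noteq> {}" "is_scheme Omega k phi"
    and "\<And>w. w \<in> Omega \<Longrightarrow> mu w \<ge> 0" "\<And>w i. w \<in> Omega \<Longrightarrow> v w i \<ge> 0"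
    and "\<And>i. i \<in> A \<Longrightarrow> (\<Sum>w\<in>Omega. mu w * v w i) \<le> c"
  shows "sender_util Omega mu A v v k phi \<le> real k * c"
proof -
  have "sig_val Omega mu phi v s i \<le> c" if "s < k" "i \<in> A" for s i
  proof -
    have "sig_val Omega mu phi v s i \<le> (\<Sum>w\<in>Omega. mu w * v w i)"
      using assms(3) that(1) assms(4,5) by (rule sig_val_le_expectation)
    then show ?thesis
      using assms(6)[OF that(2)] by linarith
  qed
  then have "Max (sig_val Omega mu phi v s ` A) \<le> c" if "s < k" for s
    using assms(1,2) that by simp
  then have "(\<Sum>s<k. Max (sig_val Omega mu phi v s ` A)) \<le> (\<Sum>s<k. c)"
    by (intro sum_mono) simp
  then show ?thesis
    by (simp add: sender_util_aligned[OF assms(1,2)])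
qed

lemma sender_util_aligned_pure_scheme:
  assumes "finite A" "A \<noteq> {}" "{..<k} \<subseteq> A" "\<And>w. w \<in> Omega \<Longrightarrow> \<sigma> w < k"
  shows "(\<Sum>w\<in>Omega. mu w * v w (\<sigma> w)) \<le> sender_util Omega mu A v v k (pure_scheme \<sigma>)"
proof -
  have "(\<Sum>w\<in>Omega. mu w * v w (\<sigma> w))
      = (\<Sum>w\<in>Omega. \<Sum>s<k. mu w * pure_scheme \<sigma> w s * v w s)"
    using assms(4)
    by (intro sum.cong) (simp_all add: pure_scheme_def mult.assoc sum_distrib_left[symmetric])
  also have "\<dots> = (\<Sum>s<k. sig_val Omega mu (pure_scheme \<sigma>) v s s)"
    unfolding sig_val_def by (rule sum.swap)
  also have "\<dots> \<le> (\<Sum>s<k. Max (sig_val Omega mu (pure_scheme \<sigma>) v s ` A))"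
    using assms(1,3) by (intro sum_mono Max_ge) auto
  finally show ?thesis
    by (simp add: sender_util_aligned[OF assms(1,2)])
qed

lemma OPT_le:
  assumes "is_scheme Omega k phi0"
    and "\<And>phi. is_scheme Omega k phi \<Longrightarrow> sender_util Omega mu A vR vS k phi \<le> c"
  shows "OPT Omega mu A vR vS k \<le> c"
  unfolding OPT_def using assms by (intro cSup_least) auto

lemma sender_util_le_OPT:
  assumes "is_scheme Omega k phi"
    and "\<And>phi. is_scheme Omega k phi \<Longrightarrow> sender_util Omega mu A vR vS k phi \<le> c"
  shows "sender_util Omega mu A vR vS k phi \<le> OPT Omega mu A vR vS k"
  unfolding OPT_def using assms by (intro cSup_upper bdd_aboveI2) auto

lemma sum_Pow_card_powers:
  fixes p q :: "'a :: comm_semiring_1"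
  assumes "finite A"
  shows "(\<Sum>X\<in>Pow A. p ^ card X * q ^ (card A - card X)) = (p + q) ^ card A"
proof -
  have "(p + q) ^ card A = (\<Sum>X\<in>Pow A. (\<Prod>x\<in>X. p) * (\<Prod>x\<in>A-X. q))"
    using prod_add[OF assms, of "\<lambda>_. p" "\<lambda>_. q"] by simp
  also have "\<dots> = (\<Sum>X\<in>Pow A. p ^ card X * q ^ (card A - card X))"
    using assms by (intro sum.cong) (auto simp: card_Diff_subset finite_subset)
  finally show ?thesis by simp
qed

lemma iid_prior_nonneg: "n \<ge> 1 \<Longrightarrow> iid_prior n G \<ge> 0"
  unfolding iid_prior_def by simp

lemma iid_val_nonneg: "iid_val G i \<ge> 0"
  unfolding iid_val_def by simp

lemma iid_prior_sum:
  assumes "n \<ge> 1"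
  shows "(\<Sum>G\<in>iid_states n. iid_prior n G) = 1"
  using sum_Pow_card_powers[of "{..<n}" "1 / real n" "1 - 1 / real n"]
  by (simp add: iid_states_def iid_prior_def)

lemma iid_prior_marginal:
  assumes "n \<ge> 1" "i < n"
  shows "(\<Sum>G\<in>iid_states n. iid_prior n G * iid_val G i) = 1 / real n"
proof -
  let ?p = "1 / real n" and ?q = "1 - 1 / real n" and ?B = "{..<n} - {i}"
  have card_B: "card ?B = n - 1" using assms by simp
  have good_i: "{G\<in>iid_states n. i \<in> G} = insert i ` Pow ?B"
  proof (intro equalityI subsetI)
    fix G assume "G \<in> {G\<in>iid_states n. i \<in> G}"
    then have "G = insert i (G - {i})" "G - {i} \<in> Pow ?B"
      by (auto simp: iid_states_def)
    then show "G \<in> insert i ` Pow ?B" by blast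
  qed (use assms in \<open>auto simp: iid_states_def\<close>)
  have inj: "inj_on (insert i) (Pow ?B)"
    by (rule inj_onI) (metis Diff_insert_absorb PowD subset_Diff_insert)
  have prior_insert: "iid_prior n (insert i H) = ?p * (?p ^ card H * ?q ^ (card ?B - card H))"
    if "H \<in> Pow ?B" for H
  proof -
    have "finite H" "i \<notin> H" "card H \<le> card ?B"
      using that by (auto intro: finite_subset card_mono)
    then show ?thesis
      using card_B by (simp add: iid_prior_def)
  qed
  have "(\<Sum>G\<in>iid_states n. iid_prior n G * iid_val G i)
      = (\<Sum>G\<in>iid_states n. if i \<in> G then iid_prior n G else 0)"
    by (intro sum.cong) (simp_all add: iid_val_def)
  also have "\<dots> = (\<Sum>G\<in>{G\<in>iid_states n. i \<in> G}. iid_prior n G)"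
    by (rule sum.inter_filter[symmetric]) (simp add: iid_states_def)
  also have "\<dots> = (\<Sum>H\<in>Pow ?B. iid_prior n (insert i H))"
    unfolding good_i by (rule sum.reindex[OF inj, unfolded comp_def])
  also have "\<dots> = ?p * (\<Sum>H\<in>Pow ?B. ?p ^ card H * ?q ^ (card ?B - card H))"
    by (simp add: prior_insert sum_distrib_left)
  also have "\<dots> = ?p"
    using sum_Pow_card_powers[of ?B ?p ?q] by simp
  finally show ?thesis .
qed

lemma sender_util_iid_le:
  assumes "n \<ge> 1" "is_scheme (iid_states n) k phi"
  shows "sender_util (iid_states n) (iid_prior n) {..<n} iid_val iid_val k phi \<le> real k / real n"
  using sender_util_aligned_le[of "{..<n}" _ k phi "iid_prior n" iid_val "1 / real n"] assms
  by (auto simp: iid_prior_nonneg iid_val_nonneg iid_prior_marginal lessThan_empty_iff)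

lemma OPT_iid_le:
  assumes "n \<ge> 1" "k \<ge> 1"
  shows "OPT_iid n k \<le> real k / real n"
  unfolding OPT_iid_def using assms sender_util_iid_le
  by (intro OPT_le[OF is_scheme_pure_scheme[of _ "\<lambda>_. 0"]]) auto

definition min_good :: "nat set \<Rightarrow> nat" where
  "min_good G = (if G = {} then 0 else Min G)"

lemma min_good_mem: "finite G \<Longrightarrow> G \<noteq> {} \<Longrightarrow> min_good G \<in> G"
  by (simp add: min_good_def)

lemma min_good_lt:
  assumes "n \<ge> 1" "G \<in> iid_states n"
  shows "min_good G < n"
proof (cases "G = {}")
  case False
  then show ?thesis
    using assms(2) min_good_mem[of G] by (auto simp: iid_states_def finite_subset)
qed (use assms in \<open>simp add: min_good_def\<close>)

lemma sender_util_min_good: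
  assumes "n \<ge> 1"
  shows "1 - (1 - 1 / real n) ^ n
       \<le> sender_util (iid_states n) (iid_prior n) {..<n} iid_val iid_val n (pure_scheme min_good)"
proof -
  have fin: "finite (iid_states n)" and empty: "{} \<in> iid_states n"
    by (simp_all add: iid_states_def)
  have val: "iid_val G (min_good G) = 1" if "G \<in> iid_states n" "G \<noteq> {}" for G
    using that min_good_mem[of G] by (auto simp: iid_val_def iid_states_def finite_subset)
  have "(\<Sum>G\<in>iid_states n. iid_prior n G * iid_val G (min_good G))
      = iid_prior n {} * iid_val {} (min_good {})
        + (\<Sum>G\<in>iid_states n - {{}}. iid_prior n G * iid_val G (min_good G))"
    by (rule sum.remove[OF fin empty])
  also have "\<dots> = (\<Sum>G\<in>iid_states n - {{}}. iid_prior n G)"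
    by (simp add: iid_val_def[of "{}"]) (rule sum.cong, simp_all add: val)
  also have "\<dots> = (\<Sum>G\<in>iid_states n. iid_prior n G) - iid_prior n {}"
    by (simp add: sum_diff1 fin empty)
  also have "\<dots> = 1 - (1 - 1 / real n) ^ n"
    using iid_prior_sum[OF assms] by (simp add: iid_prior_def)
  finally have mass: "(\<Sum>G\<in>iid_states n. iid_prior n G * iid_val G (min_good G))
      = 1 - (1 - 1 / real n) ^ n" .
  have "(\<Sum>G\<in>iid_states n. iid_prior n G * iid_val G (min_good G))
      \<le> sender_util (iid_states n) (iid_prior n) {..<n} iid_val iid_val n (pure_scheme min_good)"
    using assms min_good_lt[OF assms]
    by (intro sender_util_aligned_pure_scheme) (auto simp: lessThan_empty_iff)
  with mass show ?thesis by simp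
qed

lemma OPT_iid_all_signals_ge:
  assumes "n \<ge> 1"
  shows "1 - exp (-1) \<le> OPT_iid n n"
proof -
  have "(1 - 1 / real n) ^ n \<le> exp (-1)"
    using exp_ge_one_minus_x_over_n_power_n[of 1 n] assms by simp
  moreover have "sender_util (iid_states n) (iid_prior n) {..<n} iid_val iid_val n (pure_scheme min_good)
      \<le> OPT_iid n n"
    unfolding OPT_iid_def using min_good_lt[OF assms] sender_util_iid_le[OF assms, of n]
    by (intro sender_util_le_OPT[where c = "real n / real n"] is_scheme_pure_scheme) blast+
  ultimately show ?thesis
    using sender_util_min_good[OF assms] by linarith
qed

theorem lemma5p2:
  fixes n k :: nat
  assumes "n \<ge> 2" and "2 \<le> k" and "k \<le> n"
  shows "OPT_iid n k \<le> exp 1 / (exp 1 - 1) * (real k / real n) * OPT_iid n n"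
proof -
  have ratio: "exp 1 / (exp 1 - 1) * (1 - exp (-1)) = (1::real)"
    by (simp add: exp_minus field_simps)
  have "OPT_iid n k \<le> real k / real n"
    using assms by (intro OPT_iid_le) auto
  also have "\<dots> = exp 1 / (exp 1 - 1) * (real k / real n) * (1 - exp (-1))"
    using ratio by (simp add: mult_ac)
  also have "\<dots> \<le> exp 1 / (exp 1 - 1) * (real k / real n) * OPT_iid n n"
    using assms OPT_iid_all_signals_ge[of n] by (intro mult_left_mono) auto
  finally show ?thesis .
qed

end
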